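(* Let $W_S(\theta_0,s)=\int_{\theta_0}^{\bar\theta}\big(\theta s(\theta)+v(\theta)\big)dF(\theta)$ for $\theta_0\in[0,\bar\theta)$ and $s\in\mathcal S(\theta_0)$ (social welfare with equal weights on revenue and consumer surplus, $\lambda=1$). Then $W_S$ is maximized over all such $(\theta_0,s)$ by $\theta_0=0$ and $s=F$ (full separation without exclusion).
   Context: Let $0<\bar\theta<\infty$, $\Theta=[0,\bar\theta]$, $F$ a cdf on $\Theta$ with continuous, strictly positive density $f$, $dF=f\,d\theta$. The intrinsic value $v:\Theta\to[0,\infty)$ is twice continuously differentiable with $v'\ge0$, $v''\le0$. For $\theta_0\in[0,\bar\theta)$ and bounded measurable $a,b$ on $[\theta_0,\bar\theta]$, write $b\in\mathrm{MPS}(a)$ if $\int_x^{\bar\theta}b\,dF\le\int_x^{\bar\theta}a\,dF$ for all $x\in[\theta_0,\bar\theta]$, with equality at $x=\theta_0$. $\mathcal S(\theta_0)$ is the set of nondecreasing $s:[\theta_0,\bar\theta]\to[0,1]$ with $s\in\mathrm{MPS}(F)$ on $[\theta_0,\bar\theta]$. *)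

theory Defs
  imports "HOL-Analysis.Analysis"
begin

text \<open>Integrals w.r.t. dF with dF = f d\<theta> are written as Henstock-Kurzweil integrals
  of the integrand times the density f.\<close>

definition MPS :: "real \<Rightarrow> (real \<Rightarrow> real) \<Rightarrow> real \<Rightarrow> (real \<Rightarrow> real) \<Rightarrow> (real \<Rightarrow> real) \<Rightarrow> bool" where
  "MPS thbar f th0 b a \<longleftrightarrow>
     bounded (a ` {th0..thbar}) \<and> bounded (b ` {th0..thbar}) \<and>
     a \<in> borel_measurable (lebesgue_on {th0..thbar}) \<and>
     b \<in> borel_measurable (lebesgue_on {th0..thbar}) \<and>
     (\<forall>x\<in>{th0..thbar}. integral {x..thbar} (\<lambda>t. b t * f t) \<le> integral {x..thbar} (\<lambda>t. a t * f t)) \<and>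
     integral {th0..thbar} (\<lambda>t. b t * f t) = integral {th0..thbar} (\<lambda>t. a t * f t)"

definition Sset :: "real \<Rightarrow> (real \<Rightarrow> real) \<Rightarrow> (real \<Rightarrow> real) \<Rightarrow> real \<Rightarrow> (real \<Rightarrow> real) set" where
  "Sset thbar f F th0 = {s. mono_on {th0..thbar} s \<and> (\<forall>t\<in>{th0..thbar}. 0 \<le> s t \<and> s t \<le> 1)
                             \<and> MPS thbar f th0 s F}"

definition WS :: "real \<Rightarrow> (real \<Rightarrow> real) \<Rightarrow> (real \<Rightarrow> real) \<Rightarrow> real \<Rightarrow> (real \<Rightarrow> real) \<Rightarrow> real" where
  "WS thbar f v th0 s = integral {th0..thbar} (\<lambda>t. (t * s t + v t) * f t)"

end

theory Submission
  imports Defs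
begin

text \<open>Put h = (s - F) f. The mean-preserving-spread conditions say that every tail integral
  G(u) = \<integral> h over [u, \<theta>bar] is nonpositive and G(\<theta>0) = 0. Exchanging the order of integration,
  \<integral> \<theta> h(\<theta>) d\<theta> = \<integral> G \<le> 0, so no s \<in> S(\<theta>0) earns more revenue than F. Lowering \<theta>0 to 0 then only
  adds the nonnegative integrand (\<theta> F + v) f.\<close>

lemma abs_integral_le_bound:
  fixes k :: "real \<Rightarrow> real"
  assumes "a \<le> b" "k integrable_on {a..b}" "\<And>t. t \<in> {a..b} \<Longrightarrow> \<bar>k t\<bar> \<le> B"
  shows "\<bar>integral {a..b} k\<bar> \<le> B * (b - a)"
proof -
  have "0 \<le> B" using assms(1) assms(3)[of a] by auto
  then show ?thesis
    using has_integral_bound[OF _ integrable_integral[OF assms(2)[folded cbox_interval]]] assms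
    by (simp add: content_real)
qed

lemma constant_of_quadratic_increment_bound:
  fixes D :: "real \<Rightarrow> real"
  assumes ab: "a \<le> b"
    and bound: "\<And>x y. a \<le> x \<Longrightarrow> x \<le> y \<Longrightarrow> y \<le> b \<Longrightarrow> \<bar>D y - D x\<bar> \<le> C * (y - x)\<^sup>2"
  shows "D a = D b"
proof -
  have "(D has_field_derivative 0) (at x within {a..b})" if x: "x \<in> {a..b}" for x
    unfolding has_field_derivative_iff
  proof (rule Lim_null_comparison)
    have "\<bar>(D y - D x) / (y - x)\<bar> \<le> C * \<bar>y - x\<bar>" if y: "y \<in> {a..b}" "y \<noteq> x" for y
    proof -
      have "\<bar>D y - D x\<bar> \<le> C * (y - x)\<^sup>2"
        using bound[of x y] bound[of y x] x y by (cases "x \<le> y") (auto simp: abs_minus_commute power2_commute)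
      moreover have "(y - x)\<^sup>2 = \<bar>y - x\<bar> * \<bar>y - x\<bar>" by (simp add: power2_eq_square)
      ultimately show ?thesis
        using y by (simp add: abs_divide divide_le_eq mult.assoc)
    qed
    then show "\<forall>\<^sub>F y in at x within {a..b}. norm ((D y - D x) / (y - x)) \<le> C * \<bar>y - x\<bar>"
      by (auto simp: eventually_at_filter)
    show "((\<lambda>y. C * \<bar>y - x\<bar>) \<longlongrightarrow> 0) (at x within {a..b})"
      by (intro tendsto_mult_right_zero tendsto_eq_intros) auto
  qed
  then obtain c where "\<forall>x\<in>{a..b}. D x = c"
    using has_field_derivative_zero_constant[of "{a..b}" D] by auto
  then show ?thesis using ab by auto
qed

lemma integral_tail_integrals:
  fixes h :: "real \<Rightarrow> real"
  assumes ab: "a \<le> b" and h_int: "h integrable_on {a..b}"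
    and id_h_int: "(\<lambda>t. t * h t) integrable_on {a..b}"
    and h_bound: "\<And>t. t \<in> {a..b} \<Longrightarrow> \<bar>h t\<bar> \<le> M"
  shows "integral {a..b} (\<lambda>u. integral {u..b} h) = integral {a..b} (\<lambda>t. (t - a) * h t)"
proof -
  define G where "G u = integral {u..b} h" for u
  \<comment> \<open>Instead of Fubini, which is unavailable for Henstock-Kurzweil integrals: D has increments
    of order (y - x)^2, hence is constant, and D b = 0.\<close>
  define D where "D x = integral {x..b} (\<lambda>t. (t - x) * h t) - integral {x..b} G" for x
  have M_nonneg: "0 \<le> M" using ab h_bound[of a] by auto
  have h_sub: "h integrable_on {x..y}" if "a \<le> x" "y \<le> b" for x y
    using integrable_on_subinterval[OF h_int] that by auto
  have shifted_sub: "(\<lambda>t. (t - c) * h t) integrable_on {x..y}" if "a \<le> x" "y \<le> b" for c x y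
    using integrable_diff[OF integrable_on_subinterval[OF id_h_int] integrable_cmul[OF h_sub]] that
    by (simp add: left_diff_distrib)
  have G_int: "G integrable_on {a..b}"
    unfolding G_def by (intro integrable_continuous_interval indefinite_integral_continuous_1' h_int)
  have G_sub: "G integrable_on {x..y}" if "a \<le> x" "y \<le> b" for x y
    using integrable_on_subinterval[OF G_int] that by auto
  have G_split: "G x = integral {x..y} h + G y" if "a \<le> x" "x \<le> y" "y \<le> b" for x y
    unfolding G_def using Henstock_Kurzweil_Integration.integral_combine[OF that(2) _ h_sub[of x b]] that by auto
  have increment: "D x - D y = integral {x..y} (\<lambda>t. (t - x) * h t) + integral {x..y} (\<lambda>t. G y - G t)"
    if xy: "a \<le> x" "x \<le> y" "y \<le> b" for x y
  proof -
    have "integral {x..b} (\<lambda>t. (t - x) * h t)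
        = integral {x..y} (\<lambda>t. (t - x) * h t) + integral {y..b} (\<lambda>t. (t - x) * h t)"
      using Henstock_Kurzweil_Integration.integral_combine[OF xy(2) _ shifted_sub[of x b]] xy by auto
    also have "integral {y..b} (\<lambda>t. (t - x) * h t)
        = integral {y..b} (\<lambda>t. (t - y) * h t) + (y - x) * G y"
    proof -
      have "integral {y..b} (\<lambda>t. (t - x) * h t) = integral {y..b} (\<lambda>t. (t - y) * h t + (y - x) * h t)"
        by (rule integral_cong) (simp add: algebra_simps)
      then show ?thesis
        using integral_add[OF shifted_sub[of y b y] integrable_cmul[OF h_sub[of y b], of "y - x"]] xy
        by (simp add: G_def)
    qed
    moreover have "integral {x..b} G = integral {x..y} G + integral {y..b} G"
      using Henstock_Kurzweil_Integration.integral_combine[OF xy(2) _ G_sub[of x b]] xy by auto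
    moreover have "integral {x..y} (\<lambda>t. G y - G t) = (y - x) * G y - integral {x..y} G"
      using integral_diff[OF integrable_const_ivl G_sub[of x y]] xy by (simp add: content_real)
    ultimately show ?thesis unfolding D_def by simp
  qed
  have "\<bar>D y - D x\<bar> \<le> 2 * M * (y - x)\<^sup>2" if xy: "a \<le> x" "x \<le> y" "y \<le> b" for x y
  proof -
    have "\<bar>integral {x..y} (\<lambda>t. (t - x) * h t)\<bar> \<le> M * (y - x) * (y - x)"
    proof (rule abs_integral_le_bound)
      fix t assume t: "t \<in> {x..y}"
      have "\<bar>(t - x) * h t\<bar> = (t - x) * \<bar>h t\<bar>" using t by (simp add: abs_mult)
      also have "\<dots> \<le> (y - x) * M" using t xy h_bound[of t] M_nonneg by (intro mult_mono) auto
      finally show "\<bar>(t - x) * h t\<bar> \<le> M * (y - x)" by (simp add: mult.commute)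
    qed (use xy shifted_sub in auto)
    moreover have "\<bar>integral {x..y} (\<lambda>t. G y - G t)\<bar> \<le> M * (y - x) * (y - x)"
    proof (rule abs_integral_le_bound)
      fix t assume t: "t \<in> {x..y}"
      have "\<bar>G y - G t\<bar> \<le> M * (y - t)"
        using G_split[of t y] abs_integral_le_bound[OF _ h_sub[of t y], of M] h_bound t xy by auto
      also have "\<dots> \<le> M * (y - x)" using M_nonneg t by (intro mult_left_mono) auto
      finally show "\<bar>G y - G t\<bar> \<le> M * (y - x)" .
    qed (use xy G_sub in \<open>auto intro: integrable_diff\<close>)
    ultimately show ?thesis using increment[OF xy] by (simp add: power2_eq_square abs_minus_commute)
  qed
  then have "D a = D b" using constant_of_quadratic_increment_bound[OF ab] by blast
  then show ?thesis by (simp add: D_def G_def[abs_def])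
qed

lemma first_moment_nonpos_of_tail_integrals_nonpos:
  fixes h :: "real \<Rightarrow> real"
  assumes ab: "a \<le> b" and h_int: "h integrable_on {a..b}"
    and id_h_int: "(\<lambda>t. t * h t) integrable_on {a..b}"
    and h_bound: "\<And>t. t \<in> {a..b} \<Longrightarrow> \<bar>h t\<bar> \<le> M"
    and tails: "\<And>x. x \<in> {a..b} \<Longrightarrow> integral {x..b} h \<le> 0"
    and total: "integral {a..b} h = 0"
  shows "integral {a..b} (\<lambda>t. t * h t) \<le> 0"
proof -
  have "integral {a..b} (\<lambda>t. t * h t) = integral {a..b} (\<lambda>t. (t - a) * h t) + a * integral {a..b} h"
    using integral_add[OF integrable_diff[OF id_h_int integrable_cmul[OF h_int]] integrable_cmul[OF h_int], of a a]
    by (simp add: algebra_simps)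
  also have "\<dots> = integral {a..b} (\<lambda>u. integral {u..b} h)"
    using integral_tail_integrals[OF ab h_int id_h_int h_bound] total by simp
  also have "\<dots> \<le> integral {a..b} (\<lambda>_. 0)"
    using tails
    by (intro integral_le integrable_continuous_interval indefinite_integral_continuous_1' h_int) auto
  finally show ?thesis by simp
qed

lemma bounded_measurable_mult_continuous_integrable:
  fixes s g :: "real \<Rightarrow> real"
  assumes "s \<in> borel_measurable (lebesgue_on {a..b})" "bounded (s ` {a..b})"
    and "continuous_on {a..b} g"
  shows "(\<lambda>t. s t * g t) integrable_on {a..b}"
  using absolutely_integrable_bounded_measurable_product_real[OF assms(1) _ assms(2)
      absolutely_integrable_continuous_real[OF assms(3)]]
  by (simp add: absolutely_integrable_on_def)

lemma MPS_first_moment_le: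
  fixes f s F :: "real \<Rightarrow> real"
  assumes th0: "th0 \<le> thbar" and f_cont: "continuous_on {th0..thbar} f"
    and mps: "MPS thbar f th0 s F"
  shows "integral {th0..thbar} (\<lambda>t. t * (s t * f t)) \<le> integral {th0..thbar} (\<lambda>t. t * (F t * f t))"
proof -
  from mps have s_bdd: "bounded (s ` {th0..thbar})" and F_bdd: "bounded (F ` {th0..thbar})"
    and s_meas: "s \<in> borel_measurable (lebesgue_on {th0..thbar})"
    and F_meas: "F \<in> borel_measurable (lebesgue_on {th0..thbar})"
    and tails: "\<And>x. x \<in> {th0..thbar} \<Longrightarrow>
      integral {x..thbar} (\<lambda>t. s t * f t) \<le> integral {x..thbar} (\<lambda>t. F t * f t)"
    and total: "integral {th0..thbar} (\<lambda>t. s t * f t) = integral {th0..thbar} (\<lambda>t. F t * f t)"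
    unfolding MPS_def by auto
  have id_f_cont: "continuous_on {th0..thbar} (\<lambda>t. t * f t)"
    by (intro continuous_intros f_cont)
  have sf_int: "(\<lambda>t. s t * f t) integrable_on {th0..thbar}"
    and Ff_int: "(\<lambda>t. F t * f t) integrable_on {th0..thbar}"
    and id_sf_int: "(\<lambda>t. s t * (t * f t)) integrable_on {th0..thbar}"
    and id_Ff_int: "(\<lambda>t. F t * (t * f t)) integrable_on {th0..thbar}"
    using s_meas s_bdd F_meas F_bdd f_cont id_f_cont
    by (auto intro: bounded_measurable_mult_continuous_integrable)
  define h where "h = (\<lambda>t. s t * f t - F t * f t)"
  obtain Bs BF Bf where B: "\<And>t. t \<in> {th0..thbar} \<Longrightarrow> \<bar>s t\<bar> \<le> Bs \<and> \<bar>F t\<bar> \<le> BF \<and> \<bar>f t\<bar> \<le> Bf"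
    using s_bdd F_bdd compact_imp_bounded[OF compact_continuous_image[OF f_cont]]
    unfolding bounded_iff by (metis compact_Icc image_eqI real_norm_def)
  have h_bound: "\<bar>h t\<bar> \<le> (Bs + BF) * Bf" if "t \<in> {th0..thbar}" for t
  proof -
    have "\<bar>s t - F t\<bar> \<le> Bs + BF" "\<bar>f t\<bar> \<le> Bf"
      using B[OF that] abs_triangle_ineq4[of "s t" "F t"] by auto
    then show ?thesis
      unfolding h_def left_diff_distrib[symmetric] abs_mult by (intro mult_mono) auto
  qed
  have "integral {th0..thbar} (\<lambda>t. t * h t) \<le> 0"
  proof (rule first_moment_nonpos_of_tail_integrals_nonpos[OF th0 _ _ h_bound])
    show "h integrable_on {th0..thbar}" unfolding h_def by (intro integrable_diff sf_int Ff_int)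
    show "(\<lambda>t. t * h t) integrable_on {th0..thbar}"
      using integrable_diff[OF id_sf_int id_Ff_int] by (simp add: h_def algebra_simps)
    show "integral {x..thbar} h \<le> 0" if "x \<in> {th0..thbar}" for x
      using tails[OF that] integral_diff[OF integrable_on_subinterval[OF sf_int]
          integrable_on_subinterval[OF Ff_int], of x thbar] that
      by (simp add: h_def)
    show "integral {th0..thbar} h = 0"
      using integral_diff[OF sf_int Ff_int] total by (simp add: h_def)
  qed
  moreover have "integral {th0..thbar} (\<lambda>t. t * h t)
      = integral {th0..thbar} (\<lambda>t. t * (s t * f t)) - integral {th0..thbar} (\<lambda>t. t * (F t * f t))"
    using integral_diff[OF id_sf_int id_Ff_int] by (simp add: h_def algebra_simps)
  ultimately show ?thesis by simp
qed

lemma cdf_mono_on: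
  fixes f F :: "real \<Rightarrow> real"
  assumes f_int: "f integrable_on {a..b}" and f_nonneg: "\<And>t. t \<in> {a..b} \<Longrightarrow> 0 \<le> f t"
    and F_def: "\<And>x. x \<in> {a..b} \<Longrightarrow> F x = integral {a..x} f"
  shows "mono_on {a..b} F"
proof (rule mono_onI)
  fix x y assume xy: "x \<in> {a..b}" "y \<in> {a..b}" "x \<le> y"
  have "integral {a..y} f = integral {a..x} f + integral {x..y} f"
    using Henstock_Kurzweil_Integration.integral_combine[of a x y f] xy
      integrable_on_subinterval[OF f_int, of a y] by auto
  moreover have "0 \<le> integral {x..y} f"
    using xy f_nonneg by (intro integral_nonneg integrable_on_subinterval[OF f_int]) auto
  ultimately show "F x \<le> F y" using F_def xy by simp
qed

lemma cdf_continuous_on: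
  fixes f F :: "real \<Rightarrow> real"
  assumes "f integrable_on {a..b}" and "\<And>x. x \<in> {a..b} \<Longrightarrow> F x = integral {a..x} f"
  shows "continuous_on {a..b} F"
  using continuous_on_eq[OF indefinite_integral_continuous_1[OF assms(1)]] assms(2) by auto

lemma cdf_in_Sset:
  fixes f F :: "real \<Rightarrow> real"
  assumes ab: "a \<le> b" and f_cont: "continuous_on {a..b} f"
    and f_nonneg: "\<And>t. t \<in> {a..b} \<Longrightarrow> 0 \<le> f t"
    and F_def: "\<And>x. x \<in> {a..b} \<Longrightarrow> F x = integral {a..x} f" and F_top: "F b = 1"
  shows "F \<in> Sset b f F a"
proof -
  have f_int: "f integrable_on {a..b}" by (rule integrable_continuous_interval[OF f_cont])
  have F_mono: "mono_on {a..b} F" by (rule cdf_mono_on[OF f_int f_nonneg F_def])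
  have F_range: "0 \<le> F t \<and> F t \<le> 1" if "t \<in> {a..b}" for t
    using mono_onD[OF F_mono, of a t] mono_onD[OF F_mono, of t b] F_def[of a] F_top ab that by auto
  have "F \<in> borel_measurable (lebesgue_on {a..b})"
    using cdf_continuous_on[OF f_int F_def] by (intro continuous_imp_measurable_on_sets_lebesgue) auto
  moreover have "bounded (F ` {a..b})"
    unfolding bounded_iff using F_range by (intro exI[of _ 1]) auto
  ultimately show ?thesis
    unfolding Sset_def MPS_def using F_mono F_range by auto
qed

lemma WS_le_of_MPS:
  fixes f v s F :: "real \<Rightarrow> real"
  assumes th0: "th0 \<le> thbar" and f_cont: "continuous_on {th0..thbar} f"
    and v_cont: "continuous_on {th0..thbar} v" and mps: "MPS thbar f th0 s F"
  shows "WS thbar f v th0 s \<le> WS thbar f v th0 F"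
proof -
  have WS_split: "WS thbar f v th0 u
      = integral {th0..thbar} (\<lambda>t. t * (u t * f t)) + integral {th0..thbar} (\<lambda>t. v t * f t)"
    if "u \<in> borel_measurable (lebesgue_on {th0..thbar})" "bounded (u ` {th0..thbar})" for u
  proof -
    have "(\<lambda>t. u t * (t * f t)) integrable_on {th0..thbar}"
      using that f_cont by (intro bounded_measurable_mult_continuous_integrable continuous_intros)
    moreover have "(\<lambda>t. v t * f t) integrable_on {th0..thbar}"
      using v_cont f_cont by (intro integrable_continuous_interval continuous_intros)
    ultimately show ?thesis
      unfolding WS_def using integral_add by (simp add: algebra_simps)
  qed
  show ?thesis
    using WS_split[of s] WS_split[of F] MPS_first_moment_le[OF th0 f_cont mps] mps
    unfolding MPS_def by simp
qed

theorem corollary2: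
  fixes thbar :: real and f F v v' v'' :: "real \<Rightarrow> real"
  assumes thbar_pos: "0 < thbar"
    and f_cont: "continuous_on {0..thbar} f"
    and f_pos: "\<And>t. t \<in> {0..thbar} \<Longrightarrow> 0 < f t"
    and F_def: "\<And>x. x \<in> {0..thbar} \<Longrightarrow> F x = integral {0..x} f"
    and F_top: "F thbar = 1"
    and v_nonneg: "\<And>t. t \<in> {0..thbar} \<Longrightarrow> 0 \<le> v t"
    and v_deriv: "\<And>t. t \<in> {0..thbar} \<Longrightarrow> (v has_real_derivative v' t) (at t within {0..thbar})"
    and v'_deriv: "\<And>t. t \<in> {0..thbar} \<Longrightarrow> (v' has_real_derivative v'' t) (at t within {0..thbar})"
    and v''_cont: "continuous_on {0..thbar} v''"
    and v'_nonneg: "\<And>t. t \<in> {0..thbar} \<Longrightarrow> 0 \<le> v' t"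
    and v''_nonpos: "\<And>t. t \<in> {0..thbar} \<Longrightarrow> v'' t \<le> 0"
  shows "F \<in> Sset thbar f F 0 \<and>
         (\<forall>th0 s. 0 \<le> th0 \<and> th0 < thbar \<and> s \<in> Sset thbar f F th0
              \<longrightarrow> WS thbar f v th0 s \<le> WS thbar f v 0 F)"
proof -
  have F_S: "F \<in> Sset thbar f F 0"
    using cdf_in_Sset[OF _ f_cont _ F_def F_top] thbar_pos f_pos by (simp add: less_imp_le)
  then have F_range: "0 \<le> F t" if "t \<in> {0..thbar}" for t
    using that unfolding Sset_def by auto
  have v_cont: "continuous_on {0..thbar} v"
    using v_deriv DERIV_continuous continuous_on_eq_continuous_within by blast
  have integrand_cont: "continuous_on {0..thbar} (\<lambda>t. (t * F t + v t) * f t)"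
    using cdf_continuous_on[OF integrable_continuous_interval[OF f_cont] F_def] v_cont f_cont
    by (intro continuous_intros)
  have integrand_nonneg: "0 \<le> (t * F t + v t) * f t" if "t \<in> {0..thbar}" for t
    using F_range[OF that] v_nonneg[OF that] f_pos[OF that] that by simp
  have "WS thbar f v th0 s \<le> WS thbar f v 0 F"
    if th0: "0 \<le> th0" "th0 < thbar" and s: "s \<in> Sset thbar f F th0" for th0 s
  proof -
    have sub: "{th0..thbar} \<subseteq> {0..thbar}" using th0 by auto
    have "WS thbar f v th0 s \<le> WS thbar f v th0 F"
      using s th0 continuous_on_subset[OF f_cont sub] continuous_on_subset[OF v_cont sub]
      unfolding Sset_def by (intro WS_le_of_MPS) auto
    also have "\<dots> \<le> WS thbar f v 0 F"
      unfolding WS_def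
      using integrand_nonneg integrable_continuous_interval[OF integrand_cont]
        integrable_continuous_interval[OF continuous_on_subset[OF integrand_cont sub]]
      by (intro integral_subset_le[OF sub]) auto
    finally show ?thesis .
  qed
  with F_S show ?thesis by blast
qed

end
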